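(* Let $m\ge 7$ be an integer. Then for every integer $n\ge m-1$, $$F_{n+2^{m-6},2}\equiv F_{n,2}\pmod{2^m},$$ i.e. from the term of index $m-1$ onward the sequence $(F_{n,2}\bmod 2^m)_{n\ge0}$ is periodic with period $2^{m-6}$.
   Context: For positive integers $r\le m\le n$, $S_r(n,m)$ denotes the $r$-Stirling number of the second kind: the number of partitions of $\{1,\dots,n\}$ into $m$ non-empty blocks such that $1,\dots,r$ lie in pairwise distinct blocks. For a positive integer $r$ and integer $n\ge 0$, the $r$-Fubini number is $F_{n,r}=\sum_{k=0}^{n}(k+r)!\,S_r(n+r,k+r)$. *)

theory Defs
  imports Main "HOL-Library.Disjoint_Sets"
begin

definition r_stirling :: "nat \<Rightarrow> nat \<Rightarrow> nat \<Rightarrow> nat" where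
  "r_stirling r n m = card {P. partition_on {1..n} P \<and> card P = m \<and>
      (\<forall>B\<in>P. \<forall>i\<in>{1..r}. \<forall>j\<in>{1..r}. i \<in> B \<and> j \<in> B \<longrightarrow> i = j)}"

definition r_fubini :: "nat \<Rightarrow> nat \<Rightarrow> nat" where
  "r_fubini n r = (\<Sum>k=0..n. fact (k + r) * r_stirling r (n + r) (k + r))"

end

theory Submission
  imports Defs "HOL-Combinatorics.Stirling" "HOL-Number_Theory.Cong"
begin

text \<open>
  Let Fub n = \<Sum>k. k! S(n,k) be the Fubini numbers. Setting aside the partitions in which
  1 and 2 share a block gives F(n,2) = Fub(n+2) - Fub(n+1). Since k! S(n,k) = (\<Delta>^k x^n)(0)
  and \<Delta>^(n+1) annihilates polynomials of degree n, the function
  \<Phi>(N) = \<Sum>k\<le>n. (\<Delta>^k x^n)(N) satisfies \<Phi>(N+1) = 2 \<Phi>(N) - N^n, so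
  \<Phi>(N) = 2^N Fub(n) - \<Sum>j<N. 2^(N-1-j) j^n, a finite form of Fub(n) = \<Sum>j. j^n / 2^(j+1).
  On the other hand \<Phi>(N) \<equiv> \<Phi>(0) = Fub(n) modulo N. Taking N = 2^m determines Fub(n)
  modulo 2^m, and turns F(n+P,2) - F(n,2), with P = 2^(m-6), into a sum of the terms
  2^(2^m-1-j) j^(n+1) (j-1) (j^P-1). Each of them is divisible by 2^m: for even j because
  n + 1 \<ge> m, for odd j because j^P \<equiv> 1 modulo 2^(m-4) and 2^(2^m-1-j) (j-1) supplies the
  missing factors of 2.
\<close>

section \<open>Partitions keeping prescribed points apart\<close>

lemma partition_on_insert_singleton:
  assumes "partition_on A Q" "x \<notin> A"
  shows "partition_on (insert x A) (insert {x} Q)"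
  using assms by (auto simp: partition_on_def pairwise_insert disjnt_def)

lemma partition_on_remove_block:
  assumes "partition_on A P" "C \<in> P"
  shows "partition_on (A - C) (P - {C})"
proof -
  have "disjnt C (\<Union>(P - {C}))"
    using partition_onD2[OF assms(1)] assms(2) by (auto simp: disjnt_def pairwise_def)
  moreover have "insert C (P - {C}) = P" using assms(2) by blast
  ultimately show ?thesis using partition_on_insert assms(1) by metis
qed

lemma partition_on_remove_singleton:
  assumes "partition_on (insert x A) P" "{x} \<in> P" "x \<notin> A"
  shows "partition_on A (P - {{x}})"
  using partition_on_remove_block[OF assms(1,2)] assms(3) by simp

lemma partition_on_insert_into_block:
  assumes "partition_on A Q" "B \<in> Q" "x \<notin> A"
  shows "partition_on (insert x A) (insert (insert x B) (Q - {B}))"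
  using assms by (auto simp: partition_on_def pairwise_def disjnt_def)

lemma partition_on_remove_from_block:
  assumes "partition_on (insert x A) P" "C \<in> P" "x \<in> C" "C \<noteq> {x}" "x \<notin> A"
  shows "partition_on A (insert (C - {x}) (P - {C}))"
proof -
  have "insert x A - C = A - (C - {x})" using assms(3,5) by blast
  then have "partition_on (A - (C - {x})) (P - {C})"
    using partition_on_remove_block[OF assms(1,2)] by simp
  moreover have "C - {x} \<subseteq> A" "C - {x} \<noteq> {}"
    using partition_onD1[OF assms(1)] assms(2-5) by auto
  moreover have "disjnt (C - {x}) (\<Union>(P - {C}))"
    using partition_onD2[OF assms(1)] assms(2) by (auto simp: disjnt_def pairwise_def)
  ultimately show ?thesis by (simp add: partition_on_insert)
qed

definition separating_partitions :: "'a set \<Rightarrow> 'a set \<Rightarrow> nat \<Rightarrow> 'a set set set" where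
  "separating_partitions R A k = {P. partition_on A P \<and> card P = k \<and>
      (\<forall>B\<in>P. \<forall>i\<in>R. \<forall>j\<in>R. i \<in> B \<and> j \<in> B \<longrightarrow> i = j)}"

lemma r_stirling_eq_card_separating_partitions:
  "r_stirling r n k = card (separating_partitions {1..r} {1..n} k)"
  by (simp add: r_stirling_def separating_partitions_def)

lemma finite_separating_partitions: "finite A \<Longrightarrow> finite (separating_partitions R A k)"
  by (rule finite_subset[OF _ finitely_many_partition_on]) (auto simp: separating_partitions_def)

lemma separating_partitions_0: "A \<noteq> {} \<Longrightarrow> finite A \<Longrightarrow> separating_partitions R A 0 = {}"
  by (auto simp: separating_partitions_def partition_on_def dest: finite_UnionD)

lemma separating_partitions_self:
  "separating_partitions R R k = (if k = card R then {(\<lambda>x. {x}) ` R} else {})"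
proof -
  have singletons: "P = (\<lambda>x. {x}) ` R" if part: "partition_on R P"
    and sep: "\<forall>B\<in>P. \<forall>i\<in>R. \<forall>j\<in>R. i \<in> B \<and> j \<in> B \<longrightarrow> i = j" for P
  proof -
    have cover: "\<Union>P = R" using partition_onD1[OF part] by simp
    have singleton: "B = {x}" if "B \<in> P" "x \<in> B" for B x
    proof -
      have "B \<subseteq> R" using cover that(1) by blast
      then show ?thesis using sep that by blast
    qed
    show ?thesis
    proof (intro set_eqI iffI)
      fix B
      assume "B \<in> P"
      moreover obtain x where "x \<in> B"
        using partition_onD3[OF part] \<open>B \<in> P\<close> by (metis equals0I)
      ultimately have "B = {x}" "x \<in> R" using singleton cover by blast+
      then show "B \<in> (\<lambda>x. {x}) ` R" by blast
    next
      fix B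
      assume "B \<in> (\<lambda>x. {x}) ` R"
      then obtain x where "x \<in> R" "B = {x}" by blast
      moreover obtain C where "C \<in> P" "x \<in> C" using cover \<open>x \<in> R\<close> by blast
      ultimately show "B \<in> P" using singleton by metis
    qed
  qed
  have "(\<lambda>x. {x}) ` R \<in> separating_partitions R R (card R)"
    by (simp add: separating_partitions_def partition_on_singletons card_image)
  moreover have "P = (\<lambda>x. {x}) ` R \<and> k = card R" if "P \<in> separating_partitions R R k" for P
    using that singletons[of P] card_image[of "\<lambda>x. {x}" R]
    unfolding separating_partitions_def by auto
  ultimately have "P \<in> separating_partitions R R k \<longleftrightarrow> P = (\<lambda>x. {x}) ` R \<and> k = card R" for P
    by blast
  then show ?thesis by (simp add: set_eq_iff)
qed

lemma card_separating_partitions_with_singleton: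
  assumes "finite A" "x \<notin> A" "x \<notin> R"
  shows "card {P \<in> separating_partitions R (insert x A) (Suc k). {x} \<in> P}
       = card (separating_partitions R A k)"
proof -
  have "bij_betw (insert {x}) (separating_partitions R A k)
      {P \<in> separating_partitions R (insert x A) (Suc k). {x} \<in> P}"
  proof (rule bij_betw_byWitness[where f' = "\<lambda>P. P - {{x}}"])
    have no_singleton: "{x} \<notin> Q" if "partition_on A Q" for Q
      using partition_onD1[OF that] assms(2) by blast
    show "\<forall>Q\<in>separating_partitions R A k. insert {x} Q - {{x}} = Q"
      using no_singleton by (auto simp: separating_partitions_def)
    show "\<forall>P\<in>{P \<in> separating_partitions R (insert x A) (Suc k). {x} \<in> P}.
        insert {x} (P - {{x}}) = P"
      by auto
    show "insert {x} ` separating_partitions R A k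
        \<subseteq> {P \<in> separating_partitions R (insert x A) (Suc k). {x} \<in> P}"
      using no_singleton partition_on_insert_singleton[OF _ assms(2)] assms(3)
        finite_elements[OF assms(1)]
      by (auto simp: separating_partitions_def)
    show "(\<lambda>P. P - {{x}}) ` {P \<in> separating_partitions R (insert x A) (Suc k). {x} \<in> P}
        \<subseteq> separating_partitions R A k"
      using partition_on_remove_singleton[OF _ _ assms(2)] finite_elements[of "insert x A"] assms(1)
      by (auto simp: separating_partitions_def)
  qed
  then show ?thesis by (rule bij_betw_same_card[symmetric])
qed

lemma card_separating_partitions_without_singleton:
  assumes "finite A" "x \<notin> A" "x \<notin> R"
  shows "card {P \<in> separating_partitions R (insert x A) (Suc k). {x} \<notin> P}
       = Suc k * card (separating_partitions R A (Suc k))"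
proof -
  define S where "S = (SIGMA Q:separating_partitions R A (Suc k). Q)"
  define g where "g = (\<lambda>(Q, B). insert (insert x B) (Q - {B}))"
  have avoids_x: "x \<notin> D" if "(Q, B) \<in> S" "D \<in> Q" for Q B D
    using that assms(2) by (auto simp: S_def separating_partitions_def dest: partition_onD1)
  have "inj_on g S"
  proof (rule inj_onI, clarify)
    fix Q B Q' B' assume in_S: "(Q, B) \<in> S" "(Q', B') \<in> S" and eq: "g (Q, B) = g (Q', B')"
    have blocks: "B \<in> Q" "B' \<in> Q'" using in_S by (auto simp: S_def)
    have "insert x B \<in> insert (insert x B') (Q' - {B'})"
      using eq by (auto simp: g_def)
    then have "insert x B = insert x B'"
      using avoids_x[OF in_S(2)] by blast
    then have "B = B'"
      using avoids_x[OF in_S(1) blocks(1)] avoids_x[OF in_S(2) blocks(2)] by (simp add: insert_ident)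
    moreover have "Q - {B} = Q' - {B}"
    proof -
      have "insert x B \<notin> Q - {B}" "insert x B \<notin> Q' - {B}"
        using avoids_x[OF in_S(1)] avoids_x[OF in_S(2)] by blast+
      then show ?thesis using eq \<open>B = B'\<close> by (simp add: g_def insert_ident)
    qed
    ultimately show "Q = Q' \<and> B = B'" using blocks by blast
  qed
  moreover have "g ` S = {P \<in> separating_partitions R (insert x A) (Suc k). {x} \<notin> P}"
  proof (rule set_eqI, rule iffI)
    fix P assume "P \<in> g ` S"
    then obtain Q B where QB: "(Q, B) \<in> S" and P: "P = insert (insert x B) (Q - {B})"
      by (auto simp: g_def)
    have Q: "partition_on A Q" "card Q = Suc k" "finite Q" "B \<in> Q"
      using QB finite_elements[OF assms(1)] by (auto simp: S_def separating_partitions_def)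
    have "B \<noteq> {}" using partition_onD3[OF Q(1)] Q(4) by blast
    then have "card P = Suc k" "{x} \<notin> P"
      using avoids_x[OF QB] Q by (auto simp: P card_insert_if)
    moreover have "partition_on (insert x A) P"
      unfolding P by (rule partition_on_insert_into_block[OF Q(1,4) assms(2)])
    ultimately show "P \<in> {P \<in> separating_partitions R (insert x A) (Suc k). {x} \<notin> P}"
      using QB assms(3) by (auto simp: P S_def separating_partitions_def)
  next
    fix P assume "P \<in> {P \<in> separating_partitions R (insert x A) (Suc k). {x} \<notin> P}"
    then have P: "partition_on (insert x A) P" "card P = Suc k" "{x} \<notin> P"
      and sep: "\<forall>B\<in>P. \<forall>i\<in>R. \<forall>j\<in>R. i \<in> B \<and> j \<in> B \<longrightarrow> i = j"
      by (auto simp: separating_partitions_def)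
    obtain C where C: "C \<in> P" "x \<in> C" using partition_onD1[OF P(1)] by blast
    define Q where "Q = insert (C - {x}) (P - {C})"
    have "C \<noteq> {x}" using C P(3) by blast
    then have part_Q: "partition_on A Q"
      unfolding Q_def by (rule partition_on_remove_from_block[OF P(1) C _ assms(2)])
    have "C - {x} \<notin> P - {C}"
    proof
      assume "C - {x} \<in> P - {C}"
      then have "disjnt (C - {x}) C"
        using partition_onD2[OF P(1)] C(1) by (auto simp: pairwise_def)
      then show False using C(2) \<open>C \<noteq> {x}\<close> by (auto simp: disjnt_def)
    qed
    then have "card Q = Suc k"
      using finite_elements[OF _ P(1)] assms(1) C P(2) by (simp add: Q_def card_insert_if)
    then have "(Q, C - {x}) \<in> S"
      using part_Q sep C by (auto simp: S_def Q_def separating_partitions_def)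
    moreover have "g (Q, C - {x}) = P"
    proof -
      have "Q - {C - {x}} = P - {C}" using \<open>C - {x} \<notin> P - {C}\<close> by (auto simp: Q_def)
      moreover have "insert x (C - {x}) = C" using C(2) by blast
      ultimately show ?thesis using C(1) by (auto simp: g_def)
    qed
    ultimately show "P \<in> g ` S" by (metis image_eqI)
  qed
  moreover have "card S = Suc k * card (separating_partitions R A (Suc k))"
    using finite_separating_partitions[OF assms(1)] finite_elements[OF assms(1)]
    by (simp add: S_def card_SigmaI separating_partitions_def)
  ultimately show ?thesis by (metis card_image)
qed

lemma card_separating_partitions_insert:
  assumes "finite A" "x \<notin> A" "x \<notin> R"
  shows "card (separating_partitions R (insert x A) (Suc k))
       = card (separating_partitions R A k) + Suc k * card (separating_partitions R A (Suc k))"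
proof -
  let ?P = "separating_partitions R (insert x A) (Suc k)"
  have "finite ?P" using finite_separating_partitions assms(1) by blast
  then have "card ?P = card {P \<in> ?P. {x} \<in> P} + card {P \<in> ?P. {x} \<notin> P}"
    by (subst card_Un_disjoint[symmetric]) (auto intro: arg_cong[where f = card])
  then show ?thesis
    using card_separating_partitions_with_singleton[OF assms]
      card_separating_partitions_without_singleton[OF assms] by simp
qed

lemma r_stirling_self: "r_stirling r r k = (if k = r then 1 else 0)"
  by (simp add: r_stirling_eq_card_separating_partitions separating_partitions_self)

lemma r_stirling_0: "0 < n \<Longrightarrow> r_stirling r n 0 = 0"
  by (simp add: r_stirling_eq_card_separating_partitions separating_partitions_0)

lemma r_stirling_Suc_Suc:
  assumes "r \<le> n"
  shows "r_stirling r (Suc n) (Suc k) = r_stirling r n k + Suc k * r_stirling r n (Suc k)"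
proof -
  have "{1..Suc n} = insert (Suc n) {1..n}" by auto
  then show ?thesis
    using card_separating_partitions_insert[of "{1..n}" "Suc n" "{1..r}"] assms
    by (simp add: r_stirling_eq_card_separating_partitions)
qed

lemma r_stirling_2_add_Stirling:
  assumes "2 \<le> n"
  shows "r_stirling 2 n k + Stirling (n - 1) k = Stirling n k"
  using assms
proof (induction n arbitrary: k rule: nat_induct_at_least)
  case base
  have "k = 0 \<or> k = 1 \<or> k = 2 \<or> 2 < k" by linarith
  then show ?case
    by (elim disjE) (simp_all add: r_stirling_self numeral_2_eq_2)
next
  case (Suc n)
  show ?case
  proof (cases k)
    case 0
    then show ?thesis using Suc.hyps by (cases n) (simp_all add: r_stirling_0)
  next
    case (Suc j)
    have "Stirling n (Suc j) = Suc j * Stirling (n - 1) (Suc j) + Stirling (n - 1) j"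
      using \<open>2 \<le> n\<close> by (cases n) simp_all
    then have "r_stirling 2 (Suc n) k + Stirling (Suc n - 1) k
        = (r_stirling 2 n j + Stirling (n - 1) j)
          + Suc j * (r_stirling 2 n (Suc j) + Stirling (n - 1) (Suc j))"
      using r_stirling_Suc_Suc[OF \<open>2 \<le> n\<close>, of j] Suc by (simp add: algebra_simps)
    also have "\<dots> = Stirling (Suc n) k"
      using Suc.IH[of j] Suc.IH[of "Suc j"] Suc by simp
    finally show ?thesis .
  qed
qed

section \<open>Forward differences\<close>

text \<open>fwd_diff k g = (\<Delta>^k g)(0), where (\<Delta> g)(i) = g(i+1) - g(i).\<close>

definition fwd_diff :: "nat \<Rightarrow> (nat \<Rightarrow> 'a::comm_ring_1) \<Rightarrow> 'a" where
  "fwd_diff k g = (\<Sum>i\<le>k. (-1) ^ (k - i) * of_nat (k choose i) * g i)"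

lemma fwd_diff_0 [simp]: "fwd_diff 0 g = g 0"
  by (simp add: fwd_diff_def)

lemma fwd_diff_Suc: "fwd_diff (Suc k) g = fwd_diff k (\<lambda>i. g (Suc i)) - fwd_diff k g"
proof -
  define T where "T = (\<Sum>i\<le>k. (-1) ^ (k - i) * of_nat (k choose Suc i) * g (Suc i))"
  have Suc_k: "fwd_diff (Suc k) g = (-1) ^ Suc k * g 0 + fwd_diff k (\<lambda>i. g (Suc i)) + T"
    unfolding fwd_diff_def T_def
    by (subst sum.atMost_Suc_shift) (simp add: ring_distribs sum.distrib)
  have k: "fwd_diff k g = (-1) ^ k * g 0 - T"
  proof -
    have sign: "(-1) ^ (k - Suc i) * of_nat (k choose Suc i)
        = - ((-1) ^ (k - i) * of_nat (k choose Suc i) :: 'a)" if "i \<le> k" for i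
    proof (cases "i < k")
      case True
      then have "k - i = Suc (k - Suc i)" by simp
      then show ?thesis by simp
    next
      case False
      with that show ?thesis by (simp add: binomial_eq_0)
    qed
    have "fwd_diff k g = (\<Sum>i\<le>Suc k. (-1) ^ (k - i) * of_nat (k choose i) * g i)"
      by (simp add: fwd_diff_def binomial_eq_0)
    also have "\<dots> = (-1) ^ k * g 0
        + (\<Sum>i\<le>k. (-1) ^ (k - Suc i) * of_nat (k choose Suc i) * g (Suc i))"
      by (subst sum.atMost_Suc_shift) simp
    also have "\<dots> = (-1) ^ k * g 0 - T"
      using sign by (simp add: T_def sum_negf[symmetric])
    finally show ?thesis .
  qed
  show ?thesis unfolding Suc_k k by (simp add: algebra_simps)
qed

lemma fwd_diff_of_nat_mult:
  "fwd_diff (Suc k) (\<lambda>i. of_nat i * h i) = of_nat (Suc k) * fwd_diff k (\<lambda>i. h (Suc i))"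
proof -
  have "fwd_diff (Suc k) (\<lambda>i. of_nat i * h i)
      = (\<Sum>i\<le>k. (-1) ^ (k - i) * of_nat (Suc k choose Suc i) * (of_nat (Suc i) * h (Suc i)))"
    unfolding fwd_diff_def by (subst sum.atMost_Suc_shift) simp
  also have "\<dots> = (\<Sum>i\<le>k. of_nat (Suc k) * ((-1) ^ (k - i) * of_nat (k choose i) * h (Suc i)))"
  proof (rule sum.cong[OF refl])
    fix i
    have "of_nat (Suc k choose Suc i) * of_nat (Suc i) = (of_nat (Suc k) * of_nat (k choose i) :: 'a)"
      by (metis Suc_times_binomial_eq of_nat_mult)
    then show "(-1) ^ (k - i) * of_nat (Suc k choose Suc i) * (of_nat (Suc i) * h (Suc i))
        = of_nat (Suc k) * ((-1) ^ (k - i) * of_nat (k choose i) * h (Suc i))"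
      by (metis (no_types, lifting) mult.assoc mult.left_commute)
  qed
  also have "\<dots> = of_nat (Suc k) * fwd_diff k (\<lambda>i. h (Suc i))"
    by (simp add: fwd_diff_def sum_distrib_left)
  finally show ?thesis .
qed

lemma fwd_diff_sum: "fwd_diff k (\<lambda>i. \<Sum>j\<in>J. f j i) = (\<Sum>j\<in>J. fwd_diff k (f j))"
  unfolding fwd_diff_def by (simp add: sum_distrib_left sum.swap[of _ J])

lemma fwd_diff_cmult: "fwd_diff k (\<lambda>i. c * f i) = c * fwd_diff k f"
  unfolding fwd_diff_def by (simp add: sum_distrib_left mult_ac)

lemma fwd_diff_diff: "fwd_diff k (\<lambda>i. f i - g i) = fwd_diff k f - fwd_diff k g"
  unfolding fwd_diff_def by (simp add: algebra_simps sum_subtractf)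

lemma dvd_fwd_diff: "(\<And>i. c dvd g i) \<Longrightarrow> c dvd fwd_diff k g"
  unfolding fwd_diff_def by (intro dvd_sum dvd_mult)

lemma fact_Stirling_eq_fwd_diff:
  "of_nat (fact k * Stirling n k) = fwd_diff k (\<lambda>i. of_nat i ^ n :: 'a::comm_ring_1)"
proof (induction n arbitrary: k)
  case 0
  then show ?case by (cases k) (simp_all add: fwd_diff_Suc)
next
  case (Suc n)
  show ?case
  proof (cases k)
    case 0
    then show ?thesis by simp
  next
    case (Suc j)
    have "fact (Suc j) * Stirling (Suc n) (Suc j)
        = Suc j * (fact (Suc j) * Stirling n (Suc j) + fact j * Stirling n j)"
      by (simp add: algebra_simps)
    then have "of_nat (fact (Suc j) * Stirling (Suc n) (Suc j))
        = of_nat (Suc j) * (of_nat (fact (Suc j) * Stirling n (Suc j))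
            + of_nat (fact j * Stirling n j) :: 'a)"
      by (metis of_nat_add of_nat_mult)
    also have "\<dots> = of_nat (Suc j)
        * (fwd_diff (Suc j) (\<lambda>i. of_nat i ^ n) + fwd_diff j (\<lambda>i. of_nat i ^ n))"
      by (simp only: Suc.IH)
    also have "\<dots> = of_nat (Suc j) * fwd_diff j (\<lambda>i. of_nat (Suc i) ^ n)"
      by (simp add: fwd_diff_Suc)
    also have "\<dots> = fwd_diff (Suc j) (\<lambda>i. of_nat i ^ Suc n)"
      by (simp add: fwd_diff_of_nat_mult)
    finally show ?thesis using Suc by simp
  qed
qed

lemma fwd_diff_shifted_power:
  assumes "n < k"
  shows "fwd_diff k (\<lambda>i. (of_nat i + c) ^ n) = (0 :: 'a::comm_ring_1)"
proof -
  have "(\<lambda>i. (of_nat i + c) ^ n) = (\<lambda>i. \<Sum>j\<le>n. (of_nat (n choose j) * c ^ (n - j)) * of_nat i ^ j)"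
    by (simp add: binomial_ring mult_ac)
  then have "fwd_diff k (\<lambda>i. (of_nat i + c) ^ n)
      = (\<Sum>j\<le>n. of_nat (n choose j) * c ^ (n - j) * fwd_diff k (\<lambda>i. of_nat i ^ j))"
    by (simp add: fwd_diff_sum fwd_diff_cmult)
  also have "\<dots> = 0"
    using assms by (intro sum.neutral) (simp add: fact_Stirling_eq_fwd_diff[symmetric])
  finally show ?thesis .
qed

section \<open>Fubini numbers modulo powers of two\<close>

definition fubini :: "nat \<Rightarrow> nat" where
  "fubini n = (\<Sum>k\<le>n. fact k * Stirling n k)"

lemma fubini_eq_sum_atMost:
  assumes "n \<le> N"
  shows "fubini n = (\<Sum>k\<le>N. fact k * Stirling n k)"
proof -
  have "(\<Sum>k\<le>N. fact k * Stirling n k) = (\<Sum>k\<le>n. fact k * Stirling n k)"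
    using assms by (intro sum.mono_neutral_right) auto
  then show ?thesis by (simp add: fubini_def)
qed

lemma r_fubini_2_add_fubini: "r_fubini n 2 + fubini (Suc n) = fubini (Suc (Suc n))"
proof -
  let ?f = "\<lambda>k. fact k * r_stirling 2 (Suc (Suc n)) k"
  have "fubini (Suc (Suc n)) = (\<Sum>k\<le>Suc (Suc n). ?f k + fact k * Stirling (Suc n) k)"
    unfolding fubini_def
    by (intro sum.cong refl) (simp flip: r_stirling_2_add_Stirling add: algebra_simps)
  also have "\<dots> = (\<Sum>k\<le>Suc (Suc n). ?f k) + fubini (Suc n)"
    by (simp only: sum.distrib fubini_eq_sum_atMost[of "Suc n" "Suc (Suc n)"] le_SucI order.refl)
  finally have "fubini (Suc (Suc n)) = (\<Sum>k\<le>Suc (Suc n). ?f k) + fubini (Suc n)" .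
  moreover have "?f 0 = 0" "?f 1 = 0"
    using r_stirling_2_add_Stirling[of "Suc (Suc n)" 0] r_stirling_2_add_Stirling[of "Suc (Suc n)" 1]
    by simp_all
  then have "(\<Sum>k\<le>Suc (Suc n). ?f k) = (\<Sum>k\<le>n. ?f (k + 2))"
    by (simp add: sum.atMost_Suc_shift del: sum.atMost_Suc)
  ultimately show ?thesis
    by (simp add: r_fubini_def atLeast0AtMost)
qed

text \<open>
  shifted_fubini n N = \<Sum>k\<le>n. (\<Delta>^k x^n)(N), and weighted_power_sum N n is 2^N times the
  N-th partial sum of \<Sum>j. j^n / 2^(j+1), a series whose value is fubini n.
\<close>

definition shifted_fubini :: "nat \<Rightarrow> nat \<Rightarrow> int" where
  "shifted_fubini n N = (\<Sum>k\<le>n. fwd_diff k (\<lambda>i. (int i + int N) ^ n))"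

definition weighted_power_sum :: "nat \<Rightarrow> nat \<Rightarrow> int" where
  "weighted_power_sum N n = (\<Sum>j<N. 2 ^ (N - Suc j) * int j ^ n)"

lemma shifted_fubini_0: "shifted_fubini n 0 = int (fubini n)"
proof -
  have "int (fubini n) = (\<Sum>k\<le>n. int (fact k * Stirling n k))"
    unfolding fubini_def by (rule of_nat_sum)
  then show ?thesis
    unfolding shifted_fubini_def fact_Stirling_eq_fwd_diff by simp
qed

lemma shifted_fubini_Suc: "shifted_fubini n (Suc N) = 2 * shifted_fubini n N - int N ^ n"
proof -
  define g where "g = (\<lambda>i. (int i + int N) ^ n)"
  have "shifted_fubini n (Suc N) = (\<Sum>k\<le>n. fwd_diff k (\<lambda>i. g (Suc i)))"
    by (simp add: shifted_fubini_def g_def algebra_simps)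
  also have "\<dots> = (\<Sum>k\<le>n. fwd_diff (Suc k) g) + (\<Sum>k\<le>n. fwd_diff k g)"
    by (simp add: fwd_diff_Suc sum_subtractf)
  also have "(\<Sum>k\<le>n. fwd_diff (Suc k) g) = (\<Sum>k\<le>Suc n. fwd_diff k g) - g 0"
    by (simp add: sum.atMost_Suc_shift del: sum.atMost_Suc)
  also have "(\<Sum>k\<le>Suc n. fwd_diff k g) = (\<Sum>k\<le>n. fwd_diff k g)"
    by (simp add: g_def fwd_diff_shifted_power)
  finally show ?thesis by (simp add: shifted_fubini_def g_def)
qed

lemma shifted_fubini_eq: "shifted_fubini n N = 2 ^ N * int (fubini n) - weighted_power_sum N n"
proof (induction N)
  case 0
  then show ?case by (simp add: shifted_fubini_0 weighted_power_sum_def)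
next
  case (Suc N)
  have "weighted_power_sum (Suc N) n = (\<Sum>j<N. 2 ^ (Suc N - Suc j) * int j ^ n) + int N ^ n"
    by (simp add: weighted_power_sum_def)
  also have "(\<Sum>j<N. 2 ^ (Suc N - Suc j) * int j ^ n) = 2 * weighted_power_sum N n"
    unfolding weighted_power_sum_def sum_distrib_left
  proof (intro sum.cong refl)
    fix j assume "j \<in> {..<N}"
    then have "Suc N - Suc j = Suc (N - Suc j)" by simp
    then show "2 ^ (Suc N - Suc j) * int j ^ n = 2 * (2 ^ (N - Suc j) * int j ^ n)" by simp
  qed
  finally have "weighted_power_sum (Suc N) n = 2 * weighted_power_sum N n + int N ^ n" .
  then show ?case by (simp add: shifted_fubini_Suc Suc.IH algebra_simps)
qed

lemma shifted_fubini_cong: "[shifted_fubini n N = shifted_fubini n 0] (mod int N)"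
proof -
  have "int N dvd (int i + int N) ^ n - int i ^ n" for i
    using power_diff_sumr2[of "int i + int N" n "int i"] by simp
  then have "int N dvd shifted_fubini n N - shifted_fubini n 0"
    unfolding shifted_fubini_def
    by (simp add: sum_subtractf[symmetric] fwd_diff_diff[symmetric] dvd_sum dvd_fwd_diff)
  then show ?thesis by (simp add: cong_iff_dvd_diff)
qed

lemma fubini_cong: "[(2 ^ N - 1) * int (fubini n) = weighted_power_sum N n] (mod int N)"
proof -
  have "weighted_power_sum 0 n = 0" by (simp add: weighted_power_sum_def)
  then show ?thesis
    using shifted_fubini_cong[of n N]
    by (simp add: shifted_fubini_eq cong_iff_dvd_diff algebra_simps)
qed

lemma fubini_cong_two_power: "[int (fubini n) = - weighted_power_sum (2 ^ m) n] (mod 2 ^ m)"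
proof -
  have "(2::int) ^ m dvd 2 ^ 2 ^ m * int (fubini n)"
    by (simp add: le_imp_power_dvd less_imp_le)
  moreover have "(2::int) ^ m dvd (2 ^ 2 ^ m - 1) * int (fubini n) - weighted_power_sum (2 ^ m) n"
    using fubini_cong[of "2 ^ m" n] by (simp add: cong_iff_dvd_diff)
  ultimately have "(2::int) ^ m dvd 2 ^ 2 ^ m * int (fubini n)
      - ((2 ^ 2 ^ m - 1) * int (fubini n) - weighted_power_sum (2 ^ m) n)"
    by (rule dvd_diff)
  then show ?thesis by (simp add: cong_iff_dvd_diff algebra_simps)
qed

section \<open>The period 2^(m-6)\<close>

lemma odd_pow_two_pow_cong_1:
  fixes a :: int
  assumes "odd a" "1 \<le> k"
  shows "[a ^ 2 ^ k = 1] (mod 2 ^ (k + 2))"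
  unfolding cong_iff_dvd_diff using assms(2)
proof (induction k rule: nat_induct_at_least)
  case base
  obtain b where b: "a = 2 * b + 1" using assms(1) by (metis oddE)
  obtain c where "b * (b + 1) = 2 * c" by (metis dvd_def even_mult_iff odd_even_add odd_one)
  with b have "a ^ 2 ^ 1 - 1 = 8 * c"
    by (simp add: power2_eq_square algebra_simps)
  then show ?case by simp
next
  case (Suc k)
  have "a ^ 2 ^ Suc k - 1 = (a ^ 2 ^ k - 1) * (a ^ 2 ^ k + 1)"
    by (simp add: power_mult power2_eq_square algebra_simps)
  moreover have "2 ^ (k + 2) * 2 dvd (a ^ 2 ^ k - 1) * (a ^ 2 ^ k + 1)"
    using Suc.IH assms(1) by (intro mult_dvd_mono) simp_all
  ultimately show ?case by simp
qed

lemma two_power_dvd_odd_term: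
  fixes m j :: nat
  assumes "7 \<le> m" "odd j" "j < 2 ^ m"
  shows "(2::int) ^ m dvd 2 ^ (2 ^ m - Suc j) * (int j - 1) * (int j ^ 2 ^ (m - 6) - 1)"
proof -
  define e where "e = 2 ^ m - Suc j"
  define P :: nat where "P = 2 ^ (m - 6)"
  have period: "(2::int) ^ (m - 4) dvd int j ^ P - 1"
  proof -
    have odd: "odd (int j)" and exponent: "1 \<le> m - 6" "m - 6 + 2 = m - 4"
      using assms(1,2) by simp_all
    from odd_pow_two_pow_cong_1[OF odd exponent(1)] show ?thesis
      unfolding P_def exponent(2) cong_iff_dvd_diff .
  qed
  (* e is even. If e = 0 then j \<equiv> -1 mod 2^m and P is even; if e = 2 then j \<equiv> -3 mod 2^m,
     so 4 dvd j - 1. *)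
  have "even e" using assms unfolding e_def by simp
  then have "e = 0 \<or> e = 2 \<or> 4 \<le> e" by presburger
  then consider "e = 0" | "e = 2" | "4 \<le> e" by blast
  then have "(2::int) ^ m dvd 2 ^ e * (int j - 1) * (int j ^ P - 1)"
  proof cases
    case 1
    then have "Suc j = 2 ^ m" using assms(3) unfolding e_def by simp
    then have "int j + 1 = 2 ^ m" by (metis of_nat_Suc add.commute of_nat_numeral of_nat_power)
    then have "[int j = - 1] (mod 2 ^ m)" by (simp add: cong_iff_dvd_diff)
    then have "[int j ^ P = (- 1) ^ P] (mod 2 ^ m)" by (rule cong_pow)
    moreover have "even P" using assms(1) by (simp add: P_def)
    ultimately have "(2::int) ^ m dvd int j ^ P - 1" by (simp add: cong_iff_dvd_diff)
    then show ?thesis by simp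
  next
    case 2
    then have "j + 3 = 2 ^ m" using assms(3) unfolding e_def by simp
    then have "int (j + 3) = int (2 ^ m)" by (rule arg_cong)
    then have j_pred: "int j - 1 = 2 ^ m - 2 ^ 2" by simp
    have "(2::int) ^ 2 dvd 2 ^ m - 2 ^ 2"
      using assms(1) by (intro dvd_diff le_imp_power_dvd) simp_all
    then have "(2::int) ^ 2 dvd int j - 1" unfolding j_pred .
    then have "(2::int) ^ (2 + 2 + (m - 4)) dvd 2 ^ e * (int j - 1) * (int j ^ P - 1)"
      unfolding power_add using 2 period by (intro mult_dvd_mono) simp_all
    moreover have "2 + 2 + (m - 4) = m" using assms(1) by simp
    ultimately show ?thesis by metis
  next
    case 3
    have "(2::int) ^ (4 + 1 + (m - 4)) dvd 2 ^ e * (int j - 1) * (int j ^ P - 1)"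
      unfolding power_add using 3 period assms(2)
      by (intro mult_dvd_mono le_imp_power_dvd) simp_all
    moreover have "4 + 1 + (m - 4) = Suc m" using assms(1) by simp
    ultimately show ?thesis by (metis power_Suc dvd_mult_right)
  qed
  then show ?thesis by (simp add: e_def P_def)
qed

lemma two_power_dvd_weighted_term:
  fixes m n j :: nat
  assumes "7 \<le> m" "m - 1 \<le> n" "j < 2 ^ m"
  shows "(2::int) ^ m dvd
    int j ^ Suc n * (2 ^ (2 ^ m - Suc j) * (int j - 1) * (int j ^ 2 ^ (m - 6) - 1))"
proof (cases "even j")
  case True
  have "m \<le> Suc n" using assms(1,2) by linarith
  then have "(2::int) ^ m dvd 2 ^ Suc n" by (rule le_imp_power_dvd)
  moreover obtain t where "j = 2 * t" using True by blast
  then have "(2::int) ^ Suc n dvd int j ^ Suc n" by (simp add: power_mult_distrib)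
  ultimately show ?thesis by (meson dvd_trans dvd_mult2)
next
  case False
  show ?thesis using two_power_dvd_odd_term[OF assms(1) False assms(3)] by (rule dvd_mult)
qed

lemma weighted_power_sum_difference_periodic:
  fixes m n :: nat
  assumes "7 \<le> m" "m - 1 \<le> n"
  shows "[weighted_power_sum (2 ^ m) (Suc (n + 2 ^ (m - 6)))
          - weighted_power_sum (2 ^ m) (Suc (Suc (n + 2 ^ (m - 6))))
        = weighted_power_sum (2 ^ m) (Suc n) - weighted_power_sum (2 ^ m) (Suc (Suc n))] (mod 2 ^ m)"
proof -
  define P :: nat where "P = 2 ^ (m - 6)"
  define W where "W = weighted_power_sum (2 ^ m)"
  have "(W (Suc n) - W (Suc (Suc n))) - (W (Suc (n + P)) - W (Suc (Suc (n + P))))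
      = (\<Sum>j<2 ^ m. int j ^ Suc n * (2 ^ (2 ^ m - Suc j) * (int j - 1) * (int j ^ P - 1)))"
    unfolding W_def weighted_power_sum_def sum_subtractf[symmetric]
    by (intro sum.cong refl) (simp add: power_add algebra_simps)
  moreover have "(2::int) ^ m dvd
      (\<Sum>j<2 ^ m. int j ^ Suc n * (2 ^ (2 ^ m - Suc j) * (int j - 1) * (int j ^ P - 1)))"
    unfolding P_def by (intro dvd_sum two_power_dvd_weighted_term[OF assms]) simp
  ultimately have "[W (Suc n) - W (Suc (Suc n)) = W (Suc (n + P)) - W (Suc (Suc (n + P)))] (mod 2 ^ m)"
    by (simp add: cong_iff_dvd_diff)
  then show ?thesis unfolding W_def P_def by (rule cong_sym)
qed

lemma r_fubini_2_cong:
  "[int (r_fubini n 2) = weighted_power_sum (2 ^ m) (Suc n) - weighted_power_sum (2 ^ m) (Suc (Suc n))]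
     (mod 2 ^ m)"
proof -
  have "int (r_fubini n 2) = int (fubini (Suc (Suc n))) - int (fubini (Suc n))"
    using arg_cong[OF r_fubini_2_add_fubini[of n], of int] by simp
  also have "[\<dots> = - weighted_power_sum (2 ^ m) (Suc (Suc n)) - - weighted_power_sum (2 ^ m) (Suc n)]
      (mod 2 ^ m)"
    by (intro cong_diff fubini_cong_two_power)
  finally show ?thesis by simp
qed

theorem theorem4p4:
  fixes m n :: nat
  assumes "m \<ge> 7" and "n \<ge> m - 1"
  shows "r_fubini (n + 2 ^ (m - 6)) 2 mod 2 ^ m = r_fubini n 2 mod 2 ^ m"
proof -
  define P :: nat where "P = 2 ^ (m - 6)"
  define W where "W = weighted_power_sum (2 ^ m)"
  have "[int (r_fubini (n + P) 2) = W (Suc (n + P)) - W (Suc (Suc (n + P)))] (mod 2 ^ m)"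
    unfolding W_def by (rule r_fubini_2_cong)
  also have "[W (Suc (n + P)) - W (Suc (Suc (n + P))) = W (Suc n) - W (Suc (Suc n))] (mod 2 ^ m)"
    unfolding W_def P_def by (rule weighted_power_sum_difference_periodic[OF assms])
  also have "[W (Suc n) - W (Suc (Suc n)) = int (r_fubini n 2)] (mod 2 ^ m)"
    unfolding W_def by (rule cong_sym[OF r_fubini_2_cong])
  finally have "[r_fubini (n + P) 2 = r_fubini n 2] (mod 2 ^ m)"
    by (metis cong_int_iff of_nat_numeral of_nat_power)
  then show ?thesis by (simp add: cong_def P_def)
qed

end
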